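(* Let $\beta=(\pi_\ell)_{\ell=1}^L$, $\pi_\ell=(a_\ell,b_\ell,c_\ell,d_\ell)$, be a chainable architecture with $L\ge 2$. Then $\mathcal{B}^\beta\subseteq\Sigma^{\pi_1*\cdots*\pi_L}$, and $$\pi_1*\cdots*\pi_L=\Big(a_1,\ \frac{b_1d_1}{d_L},\ \frac{a_Lc_L}{a_1},\ d_L\Big).$$
   Context: A pattern is a tuple $\pi=(a,b,c,d)$ of positive integers; $\mathbf{S}_\pi:=\mathbf{I}_a\otimes\mathbf{1}_{b\times c}\otimes\mathbf{I}_d\in\{0,1\}^{abd\times acd}$. A $\pi$-factor is a complex $abd\times acd$ matrix with support contained in that of $\mathbf{S}_\pi$; $\Sigma^\pi$ is the set of $\pi$-factors. Patterns $\pi=(a,b,c,d),\pi'=(a',b',c',d')$ are chainable if $ac/a'=b'd'/d$ is an integer, $a\mid a'$, $d'\mid d$; then $\pi*\pi':=(a,bd/d',a'c'/a,d')$. An architecture $\beta=(\pi_\ell)_{\ell=1}^L$ is a sequence of patterns with $a_\ell c_\ell d_\ell=a_{\ell+1}b_{\ell+1}d_{\ell+1}$; it is chainable if every consecutive pair is chainable. $\pi_1*\cdots*\pi_L$ denotes the iterated product $((\pi_1*\pi_2)*\cdots)*\pi_L$. $\mathcal{B}^\beta:=\{\mathbf{X}_1\cdots\mathbf{X}_L:\mathbf{X}_\ell\in\Sigma^{\pi_\ell}\}$. *)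

theory Defs
  imports Complex_Main "Jordan_Normal_Form.Matrix"
begin

type_synonym pattern = "nat \<times> nat \<times> nat \<times> nat"

definition is_pattern :: "pattern \<Rightarrow> bool" where
  "is_pattern \<pi> \<longleftrightarrow> (case \<pi> of (a,b,c,d) \<Rightarrow> 0 < a \<and> 0 < b \<and> 0 < c \<and> 0 < d)"

text \<open>S_pi = I_a (x) 1_{b x c} (x) I_d, written out entrywise (0-based indices,
  row i = (i1*b+i2)*d+i3, column j = (j1*c+j2)*d+j3, entry 1 iff i1=j1 and i3=j3).\<close>
fun S_pat :: "pattern \<Rightarrow> complex mat" where
  "S_pat (a,b,c,d) = mat (a*b*d) (a*c*d)
     (\<lambda>(i,j). if i div (b*d) = j div (c*d) \<and> i mod d = j mod d then 1 else 0)"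

fun Sigma_pat :: "pattern \<Rightarrow> complex mat set" where
  "Sigma_pat (a,b,c,d) = {X. dim_row X = a*b*d \<and> dim_col X = a*c*d \<and>
     (\<forall>i<a*b*d. \<forall>j<a*c*d. S_pat (a,b,c,d) $$ (i,j) = 0 \<longrightarrow> X $$ (i,j) = 0)}"

text \<open>Chainability of two patterns: ac/a' = b'd'/d (as rationals, i.e. a c d = a' b' d'),
  this number is an integer (a' divides ac), a | a', d' | d.\<close>
fun chainable_pair :: "pattern \<Rightarrow> pattern \<Rightarrow> bool" where
  "chainable_pair (a,b,c,d) (a',b',c',d') \<longleftrightarrow>
     a*c*d = a'*b'*d' \<and> a' dvd a*c \<and> a dvd a' \<and> d' dvd d"

text \<open>Product of chainable patterns (divisions are exact for chainable pairs).\<close>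
fun pstar :: "pattern \<Rightarrow> pattern \<Rightarrow> pattern" where
  "pstar (a,b,c,d) (a',b',c',d') = (a, b*d div d', a'*c' div a, d')"

fun pat_in :: "pattern \<Rightarrow> nat" where "pat_in (a,b,c,d) = a*b*d"
fun pat_out :: "pattern \<Rightarrow> nat" where "pat_out (a,b,c,d) = a*c*d"

definition architecture :: "pattern list \<Rightarrow> bool" where
  "architecture \<beta> \<longleftrightarrow> (\<forall>\<pi>\<in>set \<beta>. is_pattern \<pi>) \<and>
     (\<forall>l. Suc l < length \<beta> \<longrightarrow> pat_out (\<beta>!l) = pat_in (\<beta>!Suc l))"

definition chainable_arch :: "pattern list \<Rightarrow> bool" where
  "chainable_arch \<beta> \<longleftrightarrow> (\<forall>l. Suc l < length \<beta> \<longrightarrow> chainable_pair (\<beta>!l) (\<beta>!Suc l))"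

definition pstar_all :: "pattern list \<Rightarrow> pattern" where
  "pstar_all \<beta> = foldl pstar (hd \<beta>) (tl \<beta>)"

definition B_arch :: "pattern list \<Rightarrow> complex mat set" where
  "B_arch \<beta> = {foldl (*) (hd Xs) (tl Xs) | Xs.
     length Xs = length \<beta> \<and> (\<forall>l<length \<beta>. Xs!l \<in> Sigma_pat (\<beta>!l))}"

end

theory Submission imports Defs begin

(* If (i,k) is in
   the support of pi and (k,j) in that of pi', chainability (a | a', d' | d, a c d = a' b' d')
   turns the block of k for pi into its block for pi' and refines mod d to mod d', so (i,j)
   lies in the support of pi * pi'.  Hence a pi-factor times a pi'-factor is a
   (pi * pi')-factor; moreover pi * pi' is chainable with the successor of pi' and
   (pi * pi') * pi'' = pi * pi'', so induction along the architecture gives both claims. *)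

fun pat_support :: "pattern \<Rightarrow> nat \<Rightarrow> nat \<Rightarrow> bool" where
  "pat_support (a,b,c,d) i j \<longleftrightarrow> i div (b*d) = j div (c*d) \<and> i mod d = j mod d"

lemma mem_Sigma_pat_iff:
  "X \<in> Sigma_pat \<pi> \<longleftrightarrow> dim_row X = pat_in \<pi> \<and> dim_col X = pat_out \<pi> \<and>
     (\<forall>i<pat_in \<pi>. \<forall>j<pat_out \<pi>. X $$ (i,j) \<noteq> 0 \<longrightarrow> pat_support \<pi> i j)"
  by (cases \<pi>) auto

lemma mult_mat_entry_nonzeroE:
  fixes A B :: "'a :: semiring_0 mat"
  assumes "(A * B) $$ (i,j) \<noteq> 0" "i < dim_row A" "j < dim_col B" "dim_col A = dim_row B"
  obtains k where "k < dim_col A" "A $$ (i,k) \<noteq> 0" "B $$ (k,j) \<noteq> 0"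
proof -
  have "(A * B) $$ (i,j) = (\<Sum>k<dim_col A. A $$ (i,k) * B $$ (k,j))"
    using assms(2-4) by (auto simp: scalar_prod_def lessThan_atLeast0 intro!: sum.cong)
  with assms(1) obtain k where "k < dim_col A" "A $$ (i,k) * B $$ (k,j) \<noteq> 0"
    by (auto elim: sum.not_neutral_contains_not_neutral)
  then show thesis using that mult_not_zero by blast
qed

lemma pat_out_eq_pat_in_if_chainable:
  "chainable_pair \<pi> \<pi>' \<Longrightarrow> pat_out \<pi> = pat_in \<pi>'"
  by (cases \<pi>; cases \<pi>') auto

lemma pat_in_pstar: "chainable_pair \<pi> \<pi>' \<Longrightarrow> pat_in (pstar \<pi> \<pi>') = pat_in \<pi>"
  by (cases \<pi>; cases \<pi>') (auto elim!: dvdE)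

lemma pat_out_pstar: "chainable_pair \<pi> \<pi>' \<Longrightarrow> pat_out (pstar \<pi> \<pi>') = pat_out \<pi>'"
  by (cases \<pi>; cases \<pi>') (auto elim!: dvdE)

lemma pat_support_pstar:
  assumes "chainable_pair (a,b,c,d) (a',b',c',d')" "0 < a"
    and "pat_support (a,b,c,d) i k" "pat_support (a',b',c',d') k j"
  shows "pat_support (pstar (a,b,c,d) (a',b',c',d')) i j"
proof -
  have e: "a*c*d = a'*b'*d'" and "a dvd a'" "d' dvd d" using assms(1) by auto
  from \<open>a dvd a'\<close> obtain s where s: "a' = a*s" by (rule dvdE)
  have "a*(c*d) = a*(b'*d'*s)" using e s by (simp add: ac_simps)
  then have cd: "c*d = b'*d'*s" using \<open>0 < a\<close> by simp
  have ik: "i div (b*d) = k div (c*d)" "i mod d = k mod d"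
    and kj: "k div (b'*d') = j div (c'*d')" "k mod d' = j mod d'"
    using assms(3,4) by auto
  have "i div ((b*d div d')*d') = k div (c*d)"
    using ik \<open>d' dvd d\<close> by simp
  also have "\<dots> = k div (b'*d') div s" by (simp add: cd div_mult2_eq)
  also have "\<dots> = j div (c'*d') div s" using kj by simp
  also have "\<dots> = j div ((a'*c' div a)*d')"
    using s \<open>0 < a\<close> by (simp add: div_mult2_eq ac_simps)
  finally have "i div ((b*d div d')*d') = j div ((a'*c' div a)*d')" .
  moreover have "i mod d' = j mod d'"
    using ik kj \<open>d' dvd d\<close> by (metis mod_mod_cancel)
  ultimately show ?thesis by simp
qed

lemma mult_mem_Sigma_pat_pstar:
  assumes "chainable_pair \<pi> \<pi>'" "X \<in> Sigma_pat \<pi>" "Y \<in> Sigma_pat \<pi>'"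
  shows "X * Y \<in> Sigma_pat (pstar \<pi> \<pi>')"
proof -
  have inner: "pat_out \<pi> = pat_in \<pi>'" using assms(1) by (rule pat_out_eq_pat_in_if_chainable)
  have X: "dim_row X = pat_in \<pi>" "dim_col X = pat_out \<pi>"
    "\<And>i k. i < pat_in \<pi> \<Longrightarrow> k < pat_out \<pi> \<Longrightarrow> X $$ (i,k) \<noteq> 0 \<Longrightarrow> pat_support \<pi> i k"
    using assms(2) by (simp_all add: mem_Sigma_pat_iff)
  have Y: "dim_row Y = pat_in \<pi>'" "dim_col Y = pat_out \<pi>'"
    "\<And>k j. k < pat_in \<pi>' \<Longrightarrow> j < pat_out \<pi>' \<Longrightarrow> Y $$ (k,j) \<noteq> 0 \<Longrightarrow> pat_support \<pi>' k j"
    using assms(3) by (simp_all add: mem_Sigma_pat_iff)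
  have "pat_support (pstar \<pi> \<pi>') i j"
    if ij: "i < pat_in \<pi>" "j < pat_out \<pi>'" and nz: "(X * Y) $$ (i,j) \<noteq> 0" for i j
  proof -
    obtain a b c d a' b' c' d' where \<pi>: "\<pi> = (a,b,c,d)" and \<pi>': "\<pi>' = (a',b',c',d')"
      by (metis prod_cases4)
    have "i < dim_row X" "j < dim_col Y" "dim_col X = dim_row Y"
      using ij X(1,2) Y(1,2) inner by simp_all
    with nz obtain k where "k < dim_col X" "X $$ (i,k) \<noteq> 0" "Y $$ (k,j) \<noteq> 0"
      by (rule mult_mat_entry_nonzeroE)
    then have "pat_support (a,b,c,d) i k" "pat_support (a',b',c',d') k j"
      using X(2,3) Y(3) ij inner unfolding \<pi> \<pi>' by simp_all
    moreover have "0 < a" using ij(1) unfolding \<pi> by (auto intro: gr0I)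
    moreover have "chainable_pair (a,b,c,d) (a',b',c',d')" using assms(1) unfolding \<pi> \<pi>' .
    ultimately show ?thesis unfolding \<pi> \<pi>' by (blast intro: pat_support_pstar)
  qed
  then show ?thesis
    using X(1) Y(2) inner assms(1) by (simp add: mem_Sigma_pat_iff pat_in_pstar pat_out_pstar)
qed

lemma chainable_pair_pstar:
  assumes "chainable_pair \<pi> \<pi>'" "chainable_pair \<pi>' \<pi>''"
  shows "chainable_pair (pstar \<pi> \<pi>') \<pi>''"
proof -
  obtain a b c d a' b' c' d' where \<pi>: "\<pi> = (a,b,c,d)" and \<pi>': "\<pi>' = (a',b',c',d')"
    by (metis prod_cases4)
  obtain a'' b'' c'' d'' where \<pi>'': "\<pi>'' = (a'',b'',c'',d'')" by (metis prod_cases4)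
  have "a dvd a'" "a' dvd a''" using assms \<pi> \<pi>' \<pi>'' by simp_all
  then have "a dvd a''" by (rule dvd_trans)
  moreover have "a * (a'*c' div a) = a'*c'" using \<open>a dvd a'\<close> by (simp add: dvd_mult2)
  ultimately show ?thesis using assms(2) \<pi> \<pi>' \<pi>'' by simp
qed

lemma pstar_pstar_absorb:
  assumes "chainable_pair \<pi> \<pi>'"
  shows "pstar (pstar \<pi> \<pi>') \<pi>'' = pstar \<pi> \<pi>''"
proof -
  obtain a b c d a' b' c' d' where \<pi>: "\<pi> = (a,b,c,d)" and \<pi>': "\<pi>' = (a',b',c',d')"
    by (metis prod_cases4)
  have "d' dvd b*d" using assms \<pi> \<pi>' by simp
  then have "b*d div d' * d' = b*d" by simp
  then show ?thesis using \<pi> \<pi>' by (cases \<pi>'') simp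
qed

lemma successively_chainable_pair_pstar:
  "successively chainable_pair (\<pi> # \<pi>' # \<pi>s) \<Longrightarrow> successively chainable_pair (pstar \<pi> \<pi>' # \<pi>s)"
  by (cases \<pi>s) (auto intro: chainable_pair_pstar)

lemma foldl_pstar_eq_pstar_last:
  assumes "successively chainable_pair (\<pi> # \<pi>s)" "\<pi>s \<noteq> []"
  shows "foldl pstar \<pi> \<pi>s = pstar \<pi> (last \<pi>s)"
  using assms
proof (induction \<pi>s arbitrary: \<pi>)
  case Nil
  then show ?case by simp
next
  case (Cons \<pi>' \<pi>s)
  show ?case
  proof (cases "\<pi>s = []")
    case True
    then show ?thesis by simp
  next
    case False
    have "foldl pstar (pstar \<pi> \<pi>') \<pi>s = pstar (pstar \<pi> \<pi>') (last \<pi>s)"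
      using Cons.IH[OF successively_chainable_pair_pstar[OF Cons.prems(1)] False] .
    moreover have "chainable_pair \<pi> \<pi>'" using Cons.prems(1) by simp
    ultimately show ?thesis using False by (simp add: pstar_pstar_absorb)
  qed
qed

lemma foldl_mult_mem_Sigma_pat:
  assumes "successively chainable_pair (\<pi> # \<pi>s)" "X \<in> Sigma_pat \<pi>"
    and "list_all2 (\<lambda>X \<pi>. X \<in> Sigma_pat \<pi>) Xs \<pi>s"
  shows "foldl (*) X Xs \<in> Sigma_pat (foldl pstar \<pi> \<pi>s)"
  using assms(3,1,2)
proof (induction Xs \<pi>s arbitrary: X \<pi> rule: list_all2_induct)
  case Nil
  then show ?case by simp
next
  case (Cons Y Xs \<pi>' \<pi>s)
  have "X * Y \<in> Sigma_pat (pstar \<pi> \<pi>')"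
    using Cons.prems Cons.hyps(1) by (simp add: mult_mem_Sigma_pat_pstar)
  then show ?case
    using Cons.IH[OF successively_chainable_pair_pstar[OF Cons.prems(1)]] by simp
qed

lemma successively_iff_nth:
  "successively P xs \<longleftrightarrow> (\<forall>l. Suc l < length xs \<longrightarrow> P (xs ! l) (xs ! Suc l))"
  by (induction P xs rule: successively.induct) (simp_all add: All_less_Suc2)

lemma B_arch_eq_list_all2:
  "B_arch \<beta> = {foldl (*) (hd Xs) (tl Xs) | Xs. list_all2 (\<lambda>X \<pi>. X \<in> Sigma_pat \<pi>) Xs \<beta>}"
  by (auto simp: B_arch_def list_all2_conv_all_nth)

theorem lemma4p9:
  fixes \<beta> :: "pattern list" and a1 b1 c1 d1 aL bL cL dL :: nat
  assumes "architecture \<beta>" and "chainable_arch \<beta>" and "length \<beta> \<ge> 2"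
    and "\<beta> ! 0 = (a1, b1, c1, d1)" and "last \<beta> = (aL, bL, cL, dL)"
  shows "B_arch \<beta> \<subseteq> Sigma_pat (pstar_all \<beta>) \<and>
         pstar_all \<beta> = (a1, b1 * d1 div dL, aL * cL div a1, dL)"
proof -
  obtain \<pi> \<pi>s where \<beta>: "\<beta> = \<pi> # \<pi>s"
    using assms(3) by (metis neq_Nil_conv list.size(3) not_numeral_le_zero)
  with assms(3) have "\<pi>s \<noteq> []" by auto
  have chain: "successively chainable_pair (\<pi> # \<pi>s)"
    using assms(2) \<beta> by (simp only: chainable_arch_def successively_iff_nth)
  have "B_arch \<beta> \<subseteq> Sigma_pat (pstar_all \<beta>)"
  proof
    fix Y assume "Y \<in> B_arch \<beta>"
    then obtain X Xs where "Y = foldl (*) X Xs" "X \<in> Sigma_pat \<pi>"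
      "list_all2 (\<lambda>X \<pi>. X \<in> Sigma_pat \<pi>) Xs \<pi>s"
      unfolding B_arch_eq_list_all2 \<beta> by (auto simp: list_all2_Cons2)
    then show "Y \<in> Sigma_pat (pstar_all \<beta>)"
      using foldl_mult_mem_Sigma_pat[OF chain] \<beta> by (simp add: pstar_all_def)
  qed
  moreover have "pstar_all \<beta> = pstar \<pi> (last \<pi>s)"
    using foldl_pstar_eq_pstar_last[OF chain \<open>\<pi>s \<noteq> []\<close>] \<beta> by (simp add: pstar_all_def)
  ultimately show ?thesis
    using assms(4,5) \<beta> \<open>\<pi>s \<noteq> []\<close> by simp
qed

end
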